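(* Let $G$ be a game and let $H$ be the game obtained from $G$ by removing a dominated option (a Left option $G^{L_1}$ for which some other Left option $G^{L_2}$ satisfies $G^{L_1}\le G^{L_2}$, or a Right option $G^{R_1}$ for which some other Right option $G^{R_2}$ satisfies $G^{R_2}\le G^{R_1}$). Then $G \triangleq H$.
   Context: Games are short (finite) normal-play combinatorial games between players Left and Right, written $G\cong\{L(G)\mid R(G)\}$, where $\cong$ denotes identity of literal forms (game trees) and $L(G),R(G)$ are the sets of Left and Right options. The disjunctive sum is $G+H\cong\{L(G)+H,\,G+L(H)\mid R(G)+H,\,G+R(H)\}$, negation is $-G\cong\{-R(G)\mid -L(G)\}$, and $G-H$ means $G+(-H)$; $\le$ and $=$ are the usual partial order and equality of game values ($G\le H$ iff Left wins $H-G$ when Right moves first). Equivalence modulo domination: $G\triangleq H$ means that in $G+(-H)$, for every move by either player (as first player) in one of the two summands, the other player has a response in the other summand after which the responding player wins (with the first player to move next). *)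

theory Defs
  imports Main "HOL-Library.FSet"
begin

text \<open>Short games as finite game trees (literal forms): finite sets of Left and Right options.\<close>
datatype game = Game (lopts: "game fset") (ropts: "game fset")

text \<open>Outcome under optimal play (normal play): first component = Left wins moving first,
  second component = Right wins moving first.\<close>
primrec outc :: "game \<Rightarrow> bool \<times> bool" where
  "outc (Game L R) =
     (fBex (fimage outc L) (\<lambda>p. \<not> snd p), fBex (fimage outc R) (\<lambda>p. \<not> fst p))"

definition lfirst :: "game \<Rightarrow> bool" where "lfirst G = fst (outc G)"
definition rfirst :: "game \<Rightarrow> bool" where "rfirst G = snd (outc G)"

definition lwins_second :: "game \<Rightarrow> bool" where "lwins_second G = (\<not> rfirst G)"
definition rwins_second :: "game \<Rightarrow> bool" where "rwins_second G = (\<not> lfirst G)"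

primrec neg :: "game \<Rightarrow> game" where
  "neg (Game L R) = Game (fimage neg R) (fimage neg L)"

lemma size_lopt: "x |\<in>| L \<Longrightarrow> size x < size (Game L R)"
  by (induction L) (auto simp: size_fset_simps)

lemma size_ropt: "x |\<in>| R \<Longrightarrow> size x < size (Game L R)"
  by (induction R) (auto simp: size_fset_simps)

function gsum :: "game \<Rightarrow> game \<Rightarrow> game" where
  "gsum (Game GL GR) (Game HL HR) =
     Game (fimage (\<lambda>X. gsum X (Game HL HR)) GL |\<union>| fimage (\<lambda>Y. gsum (Game GL GR) Y) HL)
          (fimage (\<lambda>X. gsum X (Game HL HR)) GR |\<union>| fimage (\<lambda>Y. gsum (Game GL GR) Y) HR)"
  by pat_completeness auto
termination
  by (relation "measure (\<lambda>(g, h). size g + size h)")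
     (auto dest: size_lopt size_ropt)

definition gdiff :: "game \<Rightarrow> game \<Rightarrow> game" where "gdiff G H = gsum G (neg H)"

definition gle :: "game \<Rightarrow> game \<Rightarrow> bool" where "gle G H = lwins_second (gdiff H G)"

text \<open>Equivalence modulo domination, G \<triangleq> H, read off the summands of G + (-H).\<close>
definition dom_equiv :: "game \<Rightarrow> game \<Rightarrow> bool" where
  "dom_equiv G H \<longleftrightarrow>
     (\<forall>X |\<in>| lopts G. \<exists>Y |\<in>| ropts (neg H). rwins_second (gsum X Y)) \<and>
     (\<forall>Y |\<in>| lopts (neg H). \<exists>X |\<in>| ropts G. rwins_second (gsum X Y)) \<and>
     (\<forall>X |\<in>| ropts G. \<exists>Y |\<in>| lopts (neg H). lwins_second (gsum X Y)) \<and>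
     (\<forall>Y |\<in>| ropts (neg H). \<exists>X |\<in>| lopts G. lwins_second (gsum X Y))"

end

theory Submission
  imports Defs
begin

text \<open>In the sum \<open>G + (-H)\<close>, a winning reply of the second player to a move in one summand is
  exactly an inequality between an option of \<open>G\<close> and an option of \<open>H\<close> on the same side.
  So \<open>G \<triangleq> H\<close> says that the Left options of \<open>G\<close> and of \<open>H\<close> dominate each other, and likewise
  the Right options. Deleting a dominated option keeps this property: the deleted option is
  answered by the option dominating it, every other option by itself, since \<open>X \<le> X\<close> holds by
  the mirror strategy in \<open>X - X\<close>.\<close>

lemma lopts_neg [simp]: "lopts (neg X) = fimage neg (ropts X)"
  by (cases X) simp

lemma ropts_neg [simp]: "ropts (neg X) = fimage neg (lopts X)"
  by (cases X) simp

lemma neg_neg [simp]: "neg (neg X) = X"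
  by (induction X) (auto simp: fset.map_comp o_def fset.map_ident_strong)

lemma neg_gsum: "neg (gsum X Y) = gsum (neg X) (neg Y)"
  by (induction X Y rule: gsum.induct) (auto simp: fimage_funion fset.map_comp o_def)

lemma gsum_commute: "gsum X Y = gsum Y X"
  by (induction X Y rule: gsum.induct) (auto simp: funion_commute)

lemma lfirst_Game: "lfirst (Game L R) \<longleftrightarrow> (\<exists>A |\<in>| L. \<not> rfirst A)"
  and rfirst_Game: "rfirst (Game L R) \<longleftrightarrow> (\<exists>A |\<in>| R. \<not> lfirst A)"
  by (auto simp: lfirst_def rfirst_def)

lemma lfirst_gsum:
  "lfirst (gsum X Y) \<longleftrightarrow>
     (\<exists>A |\<in>| lopts X. \<not> rfirst (gsum A Y)) \<or> (\<exists>B |\<in>| lopts Y. \<not> rfirst (gsum X B))"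
  by (cases X; cases Y) (auto simp: lfirst_Game)

lemma rfirst_gsum:
  "rfirst (gsum X Y) \<longleftrightarrow>
     (\<exists>A |\<in>| ropts X. \<not> lfirst (gsum A Y)) \<or> (\<exists>B |\<in>| ropts Y. \<not> lfirst (gsum X B))"
  by (cases X; cases Y) (auto simp: rfirst_Game)

lemma lfirst_neg [simp]: "lfirst (neg X) \<longleftrightarrow> rfirst X"
  and rfirst_neg [simp]: "rfirst (neg X) \<longleftrightarrow> lfirst X"
  by (induction X) (auto simp: lfirst_Game rfirst_Game)

lemma gle_iff_rwins_second: "gle X Y \<longleftrightarrow> rwins_second (gdiff X Y)"
proof -
  have "gdiff X Y = neg (gdiff Y X)"
    by (simp add: gdiff_def neg_gsum gsum_commute)
  then show ?thesis
    by (simp add: gle_def lwins_second_def rwins_second_def)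
qed

lemma gle_refl: "gle X X"
proof (induction X)
  case (Game L R)
  have mirror: "\<not> rfirst (gdiff A A)" if "A |\<in>| L |\<union>| R" for A
    using Game.IH that by (auto simp: gle_def lwins_second_def)
  have "lfirst (gdiff A (Game L R))" if "A |\<in>| R" for A
    using that mirror[of A] unfolding gdiff_def lfirst_gsum by force
  moreover have "lfirst (gdiff (Game L R) A)" if "A |\<in>| L" for A
    using that mirror[of A] unfolding gdiff_def lfirst_gsum by force
  ultimately show ?case
    unfolding gle_def lwins_second_def gdiff_def rfirst_gsum by auto
qed

lemma dom_equiv_iff_options_dominate:
  "dom_equiv G H \<longleftrightarrow>
     (\<forall>X |\<in>| lopts G. \<exists>Y |\<in>| lopts H. gle X Y) \<and>
     (\<forall>Y |\<in>| lopts H. \<exists>X |\<in>| lopts G. gle Y X) \<and>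
     (\<forall>X |\<in>| ropts G. \<exists>Y |\<in>| ropts H. gle Y X) \<and>
     (\<forall>Y |\<in>| ropts H. \<exists>X |\<in>| ropts G. gle X Y)"
proof -
  have "rwins_second (gsum X (neg Y)) \<longleftrightarrow> gle X Y" for X Y
    by (simp add: gle_iff_rwins_second gdiff_def)
  moreover have "lwins_second (gsum X (neg Y)) \<longleftrightarrow> gle Y X" for X Y
    by (simp add: gle_def gdiff_def)
  ultimately show ?thesis
    unfolding dom_equiv_def by auto
qed

theorem lemma2p1:
  fixes G H :: game
  assumes "(\<exists>GL1 GL2. GL1 |\<in>| lopts G \<and> GL2 |\<in>| lopts G \<and> GL1 \<noteq> GL2 \<and> gle GL1 GL2 \<and>
              H = Game (lopts G |-| {|GL1|}) (ropts G))
         \<or> (\<exists>GR1 GR2. GR1 |\<in>| ropts G \<and> GR2 |\<in>| ropts G \<and> GR1 \<noteq> GR2 \<and> gle GR2 GR1 \<and>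
              H = Game (lopts G) (ropts G |-| {|GR1|}))"
  shows "dom_equiv G H"
  using assms
proof (elim disjE exE conjE)
  fix GL1 GL2
  assume "GL2 |\<in>| lopts G" "GL1 \<noteq> GL2" "gle GL1 GL2"
    and "H = Game (lopts G |-| {|GL1|}) (ropts G)"
  then show ?thesis
    unfolding dom_equiv_iff_options_dominate using gle_refl by auto
next
  fix GR1 GR2
  assume "GR2 |\<in>| ropts G" "GR1 \<noteq> GR2" "gle GR2 GR1"
    and "H = Game (lopts G) (ropts G |-| {|GR1|})"
  then show ?thesis
    unfolding dom_equiv_iff_options_dominate using gle_refl by auto
qed

end
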